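(* Choose an orientation of every edge of $\Gamma$. Let $\mathcal{P}ol_\nu=\bigoplus_{\mathbf i\in{\rm Seq}(\nu)}\mathcal{P}ol_{\mathbf i}$, $\mathcal{P}ol_{\mathbf i}=\mathbb Z[x_1(\mathbf i),\dots,x_m(\mathbf i)]$, and let $s_k$ act by the ring isomorphism $\mathcal{P}ol_{\mathbf i}\to\mathcal{P}ol_{s_k\mathbf i}$ sending $x_a(\mathbf i)\mapsto x_a(s_k\mathbf i)$ for $a\ne k,k+1$, $x_k(\mathbf i)\mapsto x_{k+1}(s_k\mathbf i)$, $x_{k+1}(\mathbf i)\mapsto x_k(s_k\mathbf i)$. Define operators on $\mathcal{P}ol_\nu$: $1_{\mathbf i}$ is the projection onto $\mathcal{P}ol_{\mathbf i}$; $x_{k,\mathbf i}$ kills $\mathcal{P}ol_{\mathbf j}$ for $\mathbf j\ne\mathbf i$ and multiplies $f\in\mathcal{P}ol_{\mathbf i}$ by $x_k(\mathbf i)$; $\delta_{k,\mathbf i}$ kills $\mathcal{P}ol_{\mathbf j}$ for $\mathbf j\neq\mathbf i$ and sends $f\in\mathcal{P}ol_{\mathbf i}$ to: $s_kf$ if $i_k\cdot i_{k+1}=0$; $\frac{f-s_kf}{x_k(\mathbf i)-x_{k+1}(\mathbf i)}$ if $i_k=i_{k+1}$; $s_kf$ if $i_k\cdot i_{k+1}=-1$ and the edge is oriented from $i_{k+1}$ to $i_k$; $(x_k(s_k\mathbf i)+x_{k+1}(s_k\mathbf i))\,s_kf$ if $i_k\cdot i_{k+1}=-1$ and the edge is oriented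 from $i_k$ to $i_{k+1}$. Then these operators satisfy all defining relations of $R(\nu)$ (over $\Bbbk=\mathbb Z$), hence define a left $R(\nu)$-module structure on $\mathcal{P}ol_\nu$.
   Context: Fix a graph $\Gamma$ with vertex set $I$, without loops or multiple edges. Define a symmetric bilinear form on $\mathbb Z[I]$ by $i\cdot i=2$, $i\cdot j=-1$ if $i\neq j$ are joined by an edge, and $i\cdot j=0$ otherwise. For $\nu=\sum_{i\in I}\nu_i\, i\in\mathbb N[I]$ put $m=|\nu|=\sum_i\nu_i$ and let ${\rm Seq}(\nu)$ be the set of sequences $\mathbf i=i_1i_2\cdots i_m$ of vertices in which each $i\in I$ occurs exactly $\nu_i$ times. The symmetric group $S_m$ acts on ${\rm Seq}(\nu)$ by permuting positions; $s_k=(k,k+1)$ swaps $i_k$ and $i_{k+1}$. Over a commutative ground ring $\Bbbk$ (here $\mathbb Z$ or a field), $R(\nu)$ is the associative $\Bbbk$-algebra generated by elements $1_{\mathbf i}$ ($\mathbf i\in{\rm Seq}(\nu)$), $x_{k,\mathbf i}$ ($1\le k\le m$) and $\delta_{k,\mathbf i}$ ($1\le k\le m-1$), subject to the relations: (R1) $1_{\mathbf i}1_{\mathbf j}=\delta_{\mathbf i,\mathbf j}1_{\mathbf i}$, $\sum_{\mathbf i}1_{\mathbf i}=1$, $x_{k,\mathbf i}=1_{\mathbf i}x_{k,\mathbf i}1_{\mathbf i}$, $\delta_{k,\mathbf i}=1_{s_k\mathbf i}\delta_{k,\mathbf i}1_{\mathbf i}$; (R2) $x_{k,\mathbf i}x_{l,\mathbf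 i}=x_{l,\mathbf i}x_{k,\mathbf i}$; (R3) $\delta_{k,s_k\mathbf i}\delta_{k,\mathbf i}$ equals $0$ if $i_k=i_{k+1}$, equals $1_{\mathbf i}$ if $i_k\cdot i_{k+1}=0$, and equals $x_{k,\mathbf i}+x_{k+1,\mathbf i}$ if $i_k\cdot i_{k+1}=-1$; (R4) $\delta_{k,\mathbf i}x_{l,\mathbf i}=x_{l,s_k\mathbf i}\delta_{k,\mathbf i}$ for $l\ne k,k+1$; if $i_k\neq i_{k+1}$ then $\delta_{k,\mathbf i}x_{k,\mathbf i}=x_{k+1,s_k\mathbf i}\delta_{k,\mathbf i}$ and $\delta_{k,\mathbf i}x_{k+1,\mathbf i}=x_{k,s_k\mathbf i}\delta_{k,\mathbf i}$; if $i_k=i_{k+1}$ then $x_{k,\mathbf i}\delta_{k,\mathbf i}-\delta_{k,\mathbf i}x_{k+1,\mathbf i}=1_{\mathbf i}=\delta_{k,\mathbf i}x_{k,\mathbf i}-x_{k+1,\mathbf i}\delta_{k,\mathbf i}$; (R5) $\delta_{k,s_l\mathbf i}\delta_{l,\mathbf i}=\delta_{l,s_k\mathbf i}\delta_{k,\mathbf i}$ if $|k-l|>1$; (R6) $\delta_{k,s_{k+1}s_k\mathbf i}\delta_{k+1,s_k\mathbf i}\delta_{k,\mathbf i}-\delta_{k+1,s_ks_{k+1}\mathbf i}\delta_{k,s_{k+1}\mathbf i}\delta_{k+1,\mathbf i}$ equals $1_{\mathbf i}$ if $i_k=i_{k+2}$ and $i_k\cdot i_{k+1}=-1$, and equals $0$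 otherwise. $R(\nu)$ is graded by $\deg 1_{\mathbf i}=0$, $\deg x_{k,\mathbf i}=2$, $\deg\delta_{k,\mathbf i}=-i_k\cdot i_{k+1}$. $R(0)=\Bbbk$. Write ${}_{\mathbf j}R(\nu)_{\mathbf i}=1_{\mathbf j}R(\nu)1_{\mathbf i}$. *)

theory Defs
  imports Main "HOL-Library.Poly_Mapping" "HOL-Library.Function_Algebras"
begin

text \<open>Polynomials with integer coefficients in the variables x_1, x_2, ... :
  a monomial is a finitely supported exponent vector nat =>0 nat,
  a polynomial a finitely supported map from monomials to int.\<close>
type_synonym ipoly = "(nat \<Rightarrow>\<^sub>0 nat) \<Rightarrow>\<^sub>0 int"

definition Xv :: "nat \<Rightarrow> ipoly" where
  "Xv a = Poly_Mapping.single (Poly_Mapping.single a 1) 1"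

definition pvars :: "ipoly \<Rightarrow> nat set" where
  "pvars p = (\<Union>mon \<in> Poly_Mapping.keys p. Poly_Mapping.keys mon)"

definition swp :: "nat \<Rightarrow> nat \<Rightarrow> nat" where
  "swp k a = (if a = k then Suc k else if a = Suc k then k else a)"

definition spoly :: "nat \<Rightarrow> ipoly \<Rightarrow> ipoly" where
  "spoly k p = Poly_Mapping.map_key (\<lambda>mon. Poly_Mapping.map_key (swp k) mon) p"

definition ddiff :: "nat \<Rightarrow> ipoly \<Rightarrow> ipoly" where
  "ddiff k f = (THE g. f - spoly k f = (Xv k - Xv (Suc k)) * g)"

text \<open>Sequences are lists; position k (1 <= k <= m) is the list entry k-1.
  s_k on sequences swaps positions k and k+1.\<close>
definition ent :: "'v list \<Rightarrow> nat \<Rightarrow> 'v" where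
  "ent is k = is ! (k - 1)"

definition sseq :: "nat \<Rightarrow> 'v list \<Rightarrow> 'v list" where
  "sseq k is = is[k - 1 := is ! k, k := is ! (k - 1)]"

definition Seq :: "('v \<Rightarrow> nat) \<Rightarrow> 'v list set" where
  "Seq \<nu> = {is. \<forall>i. count_list is i = \<nu> i}"

definition dotp :: "('v \<Rightarrow> 'v \<Rightarrow> bool) \<Rightarrow> 'v \<Rightarrow> 'v \<Rightarrow> int" where
  "dotp E i j = (if i = j then 2 else if E i j then -1 else 0)"

text \<open>Elements of Pol_nu = (+)_{i in Seq nu} Pol_i are represented as functions
  F from sequences to polynomials, vanishing outside Seq nu; component F i
  is a polynomial in x_1(i), ..., x_m(i), the variable x_a(i) being Xv a.\<close>
definition Polnu :: "('v \<Rightarrow> nat) \<Rightarrow> nat \<Rightarrow> ('v list \<Rightarrow> ipoly) set" where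
  "Polnu \<nu> m = {F. (\<forall>j. j \<notin> Seq \<nu> \<longrightarrow> F j = 0) \<and> (\<forall>j. pvars (F j) \<subseteq> {1..m})}"

type_synonym 'v op = "('v list \<Rightarrow> ipoly) \<Rightarrow> ('v list \<Rightarrow> ipoly)"

definition one_op :: "'v list \<Rightarrow> 'v op" where
  "one_op i F = (\<lambda>j. if j = i then F i else 0)"

definition x_op :: "nat \<Rightarrow> 'v list \<Rightarrow> 'v op" where
  "x_op k i F = (\<lambda>j. if j = i then Xv k * F i else 0)"

text \<open>Or a b means: the edge {a,b} is oriented from a to b.\<close>
definition delta_poly :: "('v \<Rightarrow> 'v \<Rightarrow> bool) \<Rightarrow> ('v \<Rightarrow> 'v \<Rightarrow> bool) \<Rightarrow> nat \<Rightarrow> 'v list \<Rightarrow> ipoly \<Rightarrow> ipoly" where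
  "delta_poly E Or k i f =
     (if ent i k = ent i (Suc k) then ddiff k f
      else if dotp E (ent i k) (ent i (Suc k)) = 0 then spoly k f
      else if Or (ent i (Suc k)) (ent i k) then spoly k f
      else (Xv k + Xv (Suc k)) * spoly k f)"

definition delta_op :: "('v \<Rightarrow> 'v \<Rightarrow> bool) \<Rightarrow> ('v \<Rightarrow> 'v \<Rightarrow> bool) \<Rightarrow> nat \<Rightarrow> 'v list \<Rightarrow> 'v op" where
  "delta_op E Or k i F = (\<lambda>j. if j = sseq k i then delta_poly E Or k i (F i) else 0)"

end

theory Submission
  imports Defs "HOL-Library.Multiset"
begin

text \<open>
  Every operator acts componentwise on Pol_nu = (+)_i Pol_i and moves
  the component at i to i or s_k i, so each defining relation of R(nu) reduces
  to an identity between operators on a single polynomial ring Z[x_1, x_2, ...].  Only (R3) and the a b a case of (R6) use that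
      Or orients each edge in exactly one direction.
  (3) Sequences: s_k on sequences is an involution with braid relations, it
      preserves Seq nu, and all sequences in Seq nu have length m = |nu|.
\<close>

section \<open>The action of s_k on polynomials\<close>

lemma swp_swp [simp]: "swp k (swp k a) = a"
  by (simp add: swp_def)

lemma inj_swp: "inj (swp k)"
  by (metis injI swp_swp)

lemma swp_k [simp]: "swp k k = Suc k" and swp_Suc_k [simp]: "swp k (Suc k) = k"
  and swp_other [simp]: "a \<noteq> k \<Longrightarrow> a \<noteq> Suc k \<Longrightarrow> swp k a = a"
  by (auto simp: swp_def)

lemma lookup_map_key_inj:
  assumes [transfer_rule]: "inj f"
  shows "Poly_Mapping.lookup (Poly_Mapping.map_key f p) x = Poly_Mapping.lookup p (f x)"
  by transfer simp

definition sm :: "nat \<Rightarrow> (nat \<Rightarrow>\<^sub>0 nat) \<Rightarrow> (nat \<Rightarrow>\<^sub>0 nat)" where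
  "sm k mon = Poly_Mapping.map_key (swp k) mon"

lemma lookup_sm [simp]: "Poly_Mapping.lookup (sm k mon) a = Poly_Mapping.lookup mon (swp k a)"
  by (simp add: sm_def lookup_map_key_inj inj_swp)

lemma sm_sm [simp]: "sm k (sm k mon) = mon"
  by (rule poly_mapping_eqI) simp

lemma inj_sm: "inj (sm k)"
  by (metis injI sm_sm)

lemma sm_add [simp]: "sm k (a + b) = sm k a + sm k b"
  by (rule poly_mapping_eqI) (simp add: lookup_add)

lemma sm_zero [simp]: "sm k 0 = 0"
  by (rule poly_mapping_eqI) simp

lemma sm_single [simp]: "sm k (Poly_Mapping.single a n) = Poly_Mapping.single (swp k a) n"
  by (rule poly_mapping_eqI) (auto simp: lookup_single when_def swp_def)

lemma lookup_spoly [simp]: "Poly_Mapping.lookup (spoly k p) mon = Poly_Mapping.lookup p (sm k mon)"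
  unfolding spoly_def sm_def [symmetric]
  by (simp add: lookup_map_key_inj inj_sm)

lemma spoly_add [simp]: "spoly k (p + q) = spoly k p + spoly k q"
  by (rule poly_mapping_eqI) (simp add: lookup_add)

lemma spoly_diff [simp]: "spoly k (p - q) = spoly k p - spoly k q"
  by (rule poly_mapping_eqI) (simp add: lookup_minus)

lemma spoly_zero [simp]: "spoly k 0 = 0"
  by (rule poly_mapping_eqI) simp

lemma spoly_spoly [simp]: "spoly k (spoly k p) = p"
  by (rule poly_mapping_eqI) simp

lemma spoly_single [simp]: "spoly k (Poly_Mapping.single mon c) = Poly_Mapping.single (sm k mon) c"
  by (rule poly_mapping_eqI) (auto simp: lookup_single when_def)

lemma spoly_one [simp]: "spoly k 1 = 1"
  by (metis sm_zero spoly_single single_one)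

lemma spoly_Xv [simp]: "spoly k (Xv a) = Xv (swp k a)"
  by (simp add: Xv_def)

text \<open>s_k is multiplicative; by bilinearity it suffices to check products of monomials.\<close>
lemma spoly_mult [simp]: "spoly k (p * q) = spoly k p * spoly k q"
proof -
  have single_left: "spoly k (frag_of a * q) = spoly k (frag_of a) * spoly k q" for a
    using subset_UNIV
    by (induction q rule: frag_induction) (simp_all add: mult_single algebra_simps)
  show ?thesis
    using subset_UNIV
  proof (induction p rule: frag_induction)
    case (diff a b)
    then show ?case by (simp add: algebra_simps)
  qed (simp_all add: single_left)
qed

lemma spoly_power [simp]: "spoly k (p ^ n) = spoly k p ^ n"
  by (induction n) auto

lemma spoly_braid: "spoly k (spoly (Suc k) (spoly k p)) = spoly (Suc k) (spoly k (spoly (Suc k) p))"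
proof (rule poly_mapping_eqI)
  fix mon
  have "sm k (sm (Suc k) (sm k mon)) = sm (Suc k) (sm k (sm (Suc k) mon))"
    by (rule poly_mapping_eqI) (simp add: swp_def)
  then show "Poly_Mapping.lookup (spoly k (spoly (Suc k) (spoly k p))) mon =
      Poly_Mapping.lookup (spoly (Suc k) (spoly k (spoly (Suc k) p))) mon"
    by simp
qed

lemma spoly_comm: "Suc k < l \<or> Suc l < k \<Longrightarrow> spoly k (spoly l p) = spoly l (spoly k p)"
proof (rule poly_mapping_eqI)
  fix mon assume "Suc k < l \<or> Suc l < k"
  then have "sm l (sm k mon) = sm k (sm l mon)"
    by (intro poly_mapping_eqI) (auto simp: swp_def)
  then show "Poly_Mapping.lookup (spoly k (spoly l p)) mon = Poly_Mapping.lookup (spoly l (spoly k p)) mon"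
    by simp
qed

lemma pvars_add: "pvars (p + q) \<subseteq> pvars p \<union> pvars q"
  unfolding pvars_def using keys_add[of p q] by blast

lemma pvars_diff: "pvars (p - q) \<subseteq> pvars p \<union> pvars q"
  unfolding pvars_def using keys_diff[of p q] by blast

lemma pvars_uminus [simp]: "pvars (- p) = pvars p"
  unfolding pvars_def by simp

lemma pvars_one [simp]: "pvars 1 = {}"
  unfolding pvars_def by simp

lemma pvars_zero [simp]: "pvars 0 = {}"
  unfolding pvars_def by simp

lemma pvars_Xv [simp]: "pvars (Xv a) = {a}"
  unfolding pvars_def Xv_def by simp

lemma pvars_single: "pvars (Poly_Mapping.single mon c) \<subseteq> Poly_Mapping.keys mon"
  unfolding pvars_def by auto

text \<open>Monomials of a product are sums of monomials of the factors.\<close>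
lemma pvars_mult: "pvars (p * q) \<subseteq> pvars p \<union> pvars q"
proof
  fix a assume "a \<in> pvars (p * q)"
  then obtain mon where mon: "mon \<in> Poly_Mapping.keys (p * q)" "a \<in> Poly_Mapping.keys mon"
    unfolding pvars_def by blast
  obtain x y where xy: "mon = x + y" "x \<in> Poly_Mapping.keys p" "y \<in> Poly_Mapping.keys q"
    using mon(1) keys_mult[of p q] by blast
  then have "a \<in> Poly_Mapping.keys x \<or> a \<in> Poly_Mapping.keys y"
    using mon(2) keys_add[of x y] by blast
  with xy show "a \<in> pvars p \<union> pvars q"
    unfolding pvars_def by blast
qed

lemma pvars_power: "pvars (p ^ n) \<subseteq> pvars p"
  by (induction n) (use pvars_mult in fastforce)+

lemma pvars_spoly: "pvars (spoly k p) \<subseteq> swp k ` pvars p"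
proof
  fix a assume "a \<in> pvars (spoly k p)"
  then obtain mon where "sm k mon \<in> Poly_Mapping.keys p" "swp k a \<in> Poly_Mapping.keys (sm k mon)"
    unfolding pvars_def by (auto simp: in_keys_iff)
  then have "swp k a \<in> pvars p"
    unfolding pvars_def by blast
  then show "a \<in> swp k ` pvars p"
    by (metis image_eqI swp_swp)
qed

section \<open>The divided difference\<close>

lemma Xv_power: "Xv a ^ n = Poly_Mapping.single (Poly_Mapping.single a n) 1"
  by (induction n) (simp_all add: Xv_def mult_single flip: single_add)

lemma Xv_inj: "Xv a = Xv b \<longleftrightarrow> a = b"
proof
  assume "Xv a = Xv b"
  then have "Poly_Mapping.lookup (Xv a) (Poly_Mapping.single a 1)
      = Poly_Mapping.lookup (Xv b) (Poly_Mapping.single a 1)"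
    by simp
  then have "Poly_Mapping.single b (1::nat) = Poly_Mapping.single a 1"
    by (simp add: Xv_def lookup_single when_def split: if_splits)
  then have "Poly_Mapping.lookup (Poly_Mapping.single b (1::nat)) a
      = Poly_Mapping.lookup (Poly_Mapping.single a 1) a"
    by simp
  then show "a = b"
    by (simp add: lookup_single when_def split: if_splits)
qed simp

lemma power_diff_divisible:
  "\<exists>g. Xv k ^ d - Xv (Suc k) ^ d = (Xv k - Xv (Suc k)) * g \<and> pvars g \<subseteq> {k, Suc k}"
proof (induction d)
  case 0
  show ?case by (intro exI[of _ 0]) simp
next
  case (Suc d)
  then obtain g where g: "Xv k ^ d - Xv (Suc k) ^ d = (Xv k - Xv (Suc k)) * g" "pvars g \<subseteq> {k, Suc k}"
    by blast
  let ?g = "Xv k * g + Xv (Suc k) ^ d"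
  have "Xv k ^ Suc d - Xv (Suc k) ^ Suc d
      = Xv k * (Xv k ^ d - Xv (Suc k) ^ d) + (Xv k - Xv (Suc k)) * Xv (Suc k) ^ d"
    by (simp add: algebra_simps)
  also have "\<dots> = (Xv k - Xv (Suc k)) * ?g"
    by (simp add: g(1) algebra_simps)
  finally show ?case
    using g(2) pvars_add[of "Xv k * g" "Xv (Suc k) ^ d"] pvars_mult[of "Xv k" g]
      pvars_power[of "Xv (Suc k)" d]
    by (intro exI[of _ ?g]) auto
qed

lemma swapped_monomial_diff_divisible:
  "\<exists>g. Xv k ^ a * Xv (Suc k) ^ b - Xv (Suc k) ^ a * Xv k ^ b = (Xv k - Xv (Suc k)) * g
     \<and> pvars g \<subseteq> {k, Suc k}"
proof -
  have ordered: "\<exists>g. Xv k ^ a * Xv (Suc k) ^ b - Xv (Suc k) ^ a * Xv k ^ b = (Xv k - Xv (Suc k)) * g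
     \<and> pvars g \<subseteq> {k, Suc k}" if "b \<le> a" for a b
  proof -
    obtain d where d: "a = b + d"
      using \<open>b \<le> a\<close> le_Suc_ex by blast
    obtain g where g: "Xv k ^ d - Xv (Suc k) ^ d = (Xv k - Xv (Suc k)) * g" "pvars g \<subseteq> {k, Suc k}"
      using power_diff_divisible by blast
    let ?c = "(Xv k * Xv (Suc k)) ^ b"
    have "Xv k ^ a * Xv (Suc k) ^ b - Xv (Suc k) ^ a * Xv k ^ b = ?c * (Xv k ^ d - Xv (Suc k) ^ d)"
      by (simp add: d power_add power_mult_distrib algebra_simps)
    also have "\<dots> = (Xv k - Xv (Suc k)) * (?c * g)"
      by (simp add: g(1) algebra_simps)
    finally show ?thesis
      using g(2) pvars_mult[of ?c g] pvars_power[of "Xv k * Xv (Suc k)" b]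
        pvars_mult[of "Xv k" "Xv (Suc k)"]
      by (intro exI[of _ "?c * g"]) auto
  qed
  show ?thesis
  proof (cases "b \<le> a")
    case True
    then show ?thesis by (rule ordered)
  next
    case False
    then obtain g where "Xv k ^ b * Xv (Suc k) ^ a - Xv (Suc k) ^ b * Xv k ^ a = (Xv k - Xv (Suc k)) * g"
      "pvars g \<subseteq> {k, Suc k}"
      using ordered[of a b] by auto
    then show ?thesis
      by (intro exI[of _ "- g"]) (auto simp: algebra_simps)
  qed
qed

lemma monomial_split:
  fixes mon :: "nat \<Rightarrow>\<^sub>0 nat"
  obtains r where
    "mon = Poly_Mapping.single k (Poly_Mapping.lookup mon k)
         + Poly_Mapping.single (Suc k) (Poly_Mapping.lookup mon (Suc k)) + r"
    "Poly_Mapping.lookup r k = 0" "Poly_Mapping.lookup r (Suc k) = 0"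
    "Poly_Mapping.keys r \<subseteq> Poly_Mapping.keys mon"
proof
  let ?r = "mon - Poly_Mapping.single k (Poly_Mapping.lookup mon k)
              - Poly_Mapping.single (Suc k) (Poly_Mapping.lookup mon (Suc k))"
  show "mon = Poly_Mapping.single k (Poly_Mapping.lookup mon k)
            + Poly_Mapping.single (Suc k) (Poly_Mapping.lookup mon (Suc k)) + ?r"
    by (rule poly_mapping_eqI) (auto simp: lookup_add lookup_minus lookup_single when_def)
  show "Poly_Mapping.lookup ?r k = 0" "Poly_Mapping.lookup ?r (Suc k) = 0"
    by (simp_all add: lookup_minus lookup_single when_def)
  show "Poly_Mapping.keys ?r \<subseteq> Poly_Mapping.keys mon"
    by (auto simp: in_keys_iff lookup_minus)
qed

lemma ddiff_exists_monomial:
  assumes "Poly_Mapping.keys mon \<subseteq> V"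
  shows "\<exists>g. frag_of mon - spoly k (frag_of mon) = (Xv k - Xv (Suc k)) * g \<and> pvars g \<subseteq> V \<union> {k, Suc k}"
proof -
  obtain r where r:
    "mon = Poly_Mapping.single k (Poly_Mapping.lookup mon k)
         + Poly_Mapping.single (Suc k) (Poly_Mapping.lookup mon (Suc k)) + r"
    "Poly_Mapping.lookup r k = 0" "Poly_Mapping.lookup r (Suc k) = 0"
    "Poly_Mapping.keys r \<subseteq> Poly_Mapping.keys mon"
    by (rule monomial_split)
  define a where "a = Poly_Mapping.lookup mon k"
  define b where "b = Poly_Mapping.lookup mon (Suc k)"
  have mon_eq: "frag_of mon = Xv k ^ a * Xv (Suc k) ^ b * frag_of r"
    unfolding a_def b_def Xv_power mult_single by (simp flip: r(1))
  have "sm k r = r"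
    by (rule poly_mapping_eqI) (use r(2,3) in \<open>simp add: swp_def\<close>)
  then have swapped_eq: "spoly k (frag_of mon) = Xv (Suc k) ^ a * Xv k ^ b * frag_of r"
    by (subst mon_eq) simp
  obtain g where g: "Xv k ^ a * Xv (Suc k) ^ b - Xv (Suc k) ^ a * Xv k ^ b = (Xv k - Xv (Suc k)) * g"
    "pvars g \<subseteq> {k, Suc k}"
    using swapped_monomial_diff_divisible by blast
  have "frag_of mon - spoly k (frag_of mon)
      = (Xv k ^ a * Xv (Suc k) ^ b - Xv (Suc k) ^ a * Xv k ^ b) * frag_of r"
    by (subst swapped_eq, subst mon_eq) (simp add: algebra_simps)
  also have "\<dots> = (Xv k - Xv (Suc k)) * (g * frag_of r)"
    by (simp add: g(1))
  finally have "frag_of mon - spoly k (frag_of mon) = (Xv k - Xv (Suc k)) * (g * frag_of r)" .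
  moreover have "pvars (g * frag_of r) \<subseteq> V \<union> {k, Suc k}"
    using pvars_mult[of g "frag_of r"] pvars_single[of r 1] g(2) r(4) assms by blast
  ultimately show ?thesis
    by blast
qed

lemma ddiff_exists:
  assumes "pvars f \<subseteq> V"
  shows "\<exists>g. f - spoly k f = (Xv k - Xv (Suc k)) * g \<and> pvars g \<subseteq> V \<union> {k, Suc k}"
proof -
  have "Poly_Mapping.keys f \<subseteq> {mon. Poly_Mapping.keys mon \<subseteq> V}"
    using assms unfolding pvars_def by blast
  then show ?thesis
  proof (induction f rule: frag_induction)
    case zero
    show ?case by (intro exI[of _ 0]) simp
  next
    case (one x)
    then show ?case using ddiff_exists_monomial by blast
  next
    case (diff a b)
    then obtain g1 g2 where
      "a - spoly k a = (Xv k - Xv (Suc k)) * g1" "pvars g1 \<subseteq> V \<union> {k, Suc k}"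
      "b - spoly k b = (Xv k - Xv (Suc k)) * g2" "pvars g2 \<subseteq> V \<union> {k, Suc k}"
      by blast
    have "(a - b) - spoly k (a - b) = (a - spoly k a) - (b - spoly k b)"
      by simp
    also have "\<dots> = (Xv k - Xv (Suc k)) * (g1 - g2)"
      by (simp only: \<open>a - spoly k a = _\<close> \<open>b - spoly k b = _\<close> right_diff_distrib)
    finally have "(a - b) - spoly k (a - b) = (Xv k - Xv (Suc k)) * (g1 - g2)" .
    then show ?case
      using pvars_diff[of g1 g2] \<open>pvars g1 \<subseteq> _\<close> \<open>pvars g2 \<subseteq> _\<close>
      by (intro exI[of _ "g1 - g2"]) auto
  qed
qed

lemma ddiff_unique:
  assumes "(Xv k - Xv (Suc k)) * g = f - spoly k f"
  shows "ddiff k f = g"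
  unfolding ddiff_def
proof (rule the_equality)
  show "f - spoly k f = (Xv k - Xv (Suc k)) * g"
    using assms by simp
  fix g' assume "f - spoly k f = (Xv k - Xv (Suc k)) * g'"
  with assms have "(Xv k - Xv (Suc k)) * g' = (Xv k - Xv (Suc k)) * g"
    by (simp only:)
  then show "g' = g"
    by (simp add: Xv_inj)
qed

lemma ddiff_eq: "(Xv k - Xv (Suc k)) * ddiff k f = f - spoly k f"
proof -
  obtain g where "f - spoly k f = (Xv k - Xv (Suc k)) * g"
    using ddiff_exists[of f "pvars f" k] by blast
  then show ?thesis
    using ddiff_unique[of k g f] by simp
qed

lemma pvars_ddiff: "pvars (ddiff k f) \<subseteq> pvars f \<union> {k, Suc k}"
proof -
  obtain g where "f - spoly k f = (Xv k - Xv (Suc k)) * g" "pvars g \<subseteq> pvars f \<union> {k, Suc k}"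
    using ddiff_exists[of f "pvars f" k] by blast
  then show ?thesis
    using ddiff_unique[of k g f] by simp
qed

section \<open>Nil-Hecke relations for divided differences\<close>

text \<open>Each identity below is proved by exhibiting the claimed value as a quotient
  and appealing to uniqueness, or by cancelling a nonzero factor x_a - x_b.\<close>

lemma ddiff_symmetric: "spoly k (ddiff k f) = ddiff k f"
proof -
  have e: "(Xv k - Xv (Suc k)) * ddiff k f = f - spoly k f"
    by (rule ddiff_eq)
  have "(Xv (Suc k) - Xv k) * spoly k (ddiff k f) = spoly k f - f"
    using arg_cong[OF e, of "spoly k"] by simp
  with e have "(Xv k - Xv (Suc k)) * spoly k (ddiff k f) = (Xv k - Xv (Suc k)) * ddiff k f"
    by algebra
  then show ?thesis
    by (simp add: Xv_inj)
qed

lemma ddiff_diff: "ddiff k (f - g) = ddiff k f - ddiff k g"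
  by (rule ddiff_unique) (simp add: right_diff_distrib ddiff_eq)

lemma ddiff_mult_symmetric: "spoly k c = c \<Longrightarrow> ddiff k (c * f) = c * ddiff k f"
proof (rule ddiff_unique)
  assume "spoly k c = c"
  then have "c * f - spoly k (c * f) = c * (f - spoly k f)"
    by (simp add: right_diff_distrib)
  then show "(Xv k - Xv (Suc k)) * (c * ddiff k f) = c * f - spoly k (c * f)"
    by (simp add: ddiff_eq mult.left_commute[of _ c])
qed

lemma ddiff_ddiff: "ddiff k (ddiff k f) = 0"
  by (rule ddiff_unique) (simp add: ddiff_symmetric)

lemma ddiff_mult_Xv_Suc: "ddiff k (Xv (Suc k) * f) = Xv k * ddiff k f - f"
proof (rule ddiff_unique)
  have "(Xv k - Xv (Suc k)) * ddiff k f = f - spoly k f"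
    by (rule ddiff_eq)
  then show "(Xv k - Xv (Suc k)) * (Xv k * ddiff k f - f) = Xv (Suc k) * f - spoly k (Xv (Suc k) * f)"
    by simp algebra
qed

lemma ddiff_mult_Xv: "ddiff k (Xv k * f) = Xv (Suc k) * ddiff k f + f"
proof (rule ddiff_unique)
  have "(Xv k - Xv (Suc k)) * ddiff k f = f - spoly k f"
    by (rule ddiff_eq)
  then show "(Xv k - Xv (Suc k)) * (Xv (Suc k) * ddiff k f + f) = Xv k * f - spoly k (Xv k * f)"
    by simp algebra
qed

lemma ddiff_spoly_far: "Suc k < l \<or> Suc l < k \<Longrightarrow> ddiff k (spoly l f) = spoly l (ddiff k f)"
proof (rule ddiff_unique)
  assume far: "Suc k < l \<or> Suc l < k"
  have "spoly l ((Xv k - Xv (Suc k)) * ddiff k f) = spoly l (f - spoly k f)"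
    by (simp add: ddiff_eq)
  then show "(Xv k - Xv (Suc k)) * spoly l (ddiff k f) = spoly l f - spoly k (spoly l f)"
    using far by (auto simp: spoly_comm)
qed

lemma ddiff_far: "Suc k < l \<or> Suc l < k \<Longrightarrow> ddiff k (ddiff l f) = ddiff l (ddiff k f)"
proof -
  assume far: "Suc k < l \<or> Suc l < k"
  have sym: "spoly k (Xv l - Xv (Suc l)) = Xv l - Xv (Suc l)"
    using far by auto
  have "(Xv l - Xv (Suc l)) * ddiff k (ddiff l f) = ddiff k ((Xv l - Xv (Suc l)) * ddiff l f)"
    by (simp add: ddiff_mult_symmetric[OF sym])
  also have "\<dots> = ddiff k f - spoly l (ddiff k f)"
    using far by (simp add: ddiff_eq ddiff_diff ddiff_spoly_far)
  also have "\<dots> = (Xv l - Xv (Suc l)) * ddiff l (ddiff k f)"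
    by (simp add: ddiff_eq)
  finally show ?thesis
    by (simp add: Xv_inj)
qed

text \<open>For the braid relation, both triple products are computed after multiplication by
  the Vandermonde product of x_k, x_(k+1), x_(k+2): each equals the alternating sum of
  f over the six permutations of these variables.\<close>
definition vandermonde :: "nat \<Rightarrow> ipoly" where
  "vandermonde k = (Xv k - Xv (Suc k)) * (Xv k - Xv (Suc (Suc k))) * (Xv (Suc k) - Xv (Suc (Suc k)))"

lemma vandermonde_nonzero: "vandermonde k \<noteq> 0"
  by (simp add: vandermonde_def Xv_inj)

lemma swp_Suc_Suc [simp]: "swp k (Suc (Suc k)) = Suc (Suc k)"
  and swp_Suc_left [simp]: "swp (Suc k) k = k"
  by (simp_all add: swp_def)

lemma vandermonde_ddiff_left:
  "vandermonde k * ddiff k (ddiff (Suc k) (ddiff k f))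
    = f - spoly k f - spoly (Suc k) f + spoly (Suc k) (spoly k f) + spoly k (spoly (Suc k) f)
      - spoly k (spoly (Suc k) (spoly k f))"
proof -
  define a where "a = ddiff k f"
  define b where "b = ddiff (Suc k) a"
  have Ea: "(Xv k - Xv (Suc k)) * a = f - spoly k f"
    unfolding a_def by (rule ddiff_eq)
  have Ea2: "(Xv k - Xv (Suc (Suc k))) * spoly (Suc k) a = spoly (Suc k) f - spoly (Suc k) (spoly k f)"
    using arg_cong[OF Ea, of "spoly (Suc k)"] by simp
  have Ea12: "(Xv (Suc k) - Xv (Suc (Suc k))) * spoly k (spoly (Suc k) a)
      = spoly k (spoly (Suc k) f) - spoly k (spoly (Suc k) (spoly k f))"
    using arg_cong[OF Ea2, of "spoly k"] by simp
  have Eb: "(Xv (Suc k) - Xv (Suc (Suc k))) * b = a - spoly (Suc k) a"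
    unfolding b_def by (rule ddiff_eq)
  have Eb1: "(Xv k - Xv (Suc (Suc k))) * spoly k b = a - spoly k (spoly (Suc k) a)"
    using arg_cong[OF Eb, of "spoly k"] by (simp add: a_def ddiff_symmetric)
  have Ec: "(Xv k - Xv (Suc k)) * ddiff k b = b - spoly k b"
    by (rule ddiff_eq)
  show ?thesis
    unfolding vandermonde_def b_def [symmetric] a_def [symmetric]
    using Ea Ea2 Ea12 Eb Eb1 Ec by algebra
qed

lemma vandermonde_ddiff_right:
  "vandermonde k * ddiff (Suc k) (ddiff k (ddiff (Suc k) f))
    = f - spoly (Suc k) f - spoly k f + spoly k (spoly (Suc k) f) + spoly (Suc k) (spoly k f)
      - spoly (Suc k) (spoly k (spoly (Suc k) f))"
proof -
  define a where "a = ddiff (Suc k) f"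
  define b where "b = ddiff k a"
  have Ea: "(Xv (Suc k) - Xv (Suc (Suc k))) * a = f - spoly (Suc k) f"
    unfolding a_def by (rule ddiff_eq)
  have Ea1: "(Xv k - Xv (Suc (Suc k))) * spoly k a = spoly k f - spoly k (spoly (Suc k) f)"
    using arg_cong[OF Ea, of "spoly k"] by simp
  have Ea21: "(Xv k - Xv (Suc k)) * spoly (Suc k) (spoly k a)
      = spoly (Suc k) (spoly k f) - spoly (Suc k) (spoly k (spoly (Suc k) f))"
    using arg_cong[OF Ea1, of "spoly (Suc k)"] by simp
  have Eb: "(Xv k - Xv (Suc k)) * b = a - spoly k a"
    unfolding b_def by (rule ddiff_eq)
  have Eb2: "(Xv k - Xv (Suc (Suc k))) * spoly (Suc k) b = a - spoly (Suc k) (spoly k a)"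
    using arg_cong[OF Eb, of "spoly (Suc k)"] by (simp add: a_def ddiff_symmetric)
  have Ec: "(Xv (Suc k) - Xv (Suc (Suc k))) * ddiff (Suc k) b = b - spoly (Suc k) b"
    by (rule ddiff_eq)
  show ?thesis
    unfolding vandermonde_def b_def [symmetric] a_def [symmetric]
    using Ea Ea1 Ea21 Eb Eb2 Ec by algebra
qed

lemma ddiff_braid: "ddiff k (ddiff (Suc k) (ddiff k f)) = ddiff (Suc k) (ddiff k (ddiff (Suc k) f))"
proof -
  have "vandermonde k * ddiff k (ddiff (Suc k) (ddiff k f))
      = vandermonde k * ddiff (Suc k) (ddiff k (ddiff (Suc k) f))"
    unfolding vandermonde_ddiff_left vandermonde_ddiff_right spoly_braid by simp
  then show ?thesis
    using vandermonde_nonzero by simp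
qed

lemma spoly_spoly_Suc_ddiff:
  "spoly k (spoly (Suc k) (ddiff k f)) = ddiff (Suc k) (spoly k (spoly (Suc k) f))"
proof (rule ddiff_unique [symmetric])
  have "spoly k (spoly (Suc k) ((Xv k - Xv (Suc k)) * ddiff k f)) = spoly k (spoly (Suc k) (f - spoly k f))"
    by (simp add: ddiff_eq)
  then show "(Xv (Suc k) - Xv (Suc (Suc k))) * spoly k (spoly (Suc k) (ddiff k f)) =
      spoly k (spoly (Suc k) f) - spoly (Suc k) (spoly k (spoly (Suc k) f))"
    by (simp add: spoly_braid)
qed

lemma spoly_Suc_spoly_ddiff:
  "spoly (Suc k) (spoly k (ddiff (Suc k) f)) = ddiff k (spoly (Suc k) (spoly k f))"
proof (rule ddiff_unique [symmetric])
  have "spoly (Suc k) (spoly k ((Xv (Suc k) - Xv (Suc (Suc k))) * ddiff (Suc k) f))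
      = spoly (Suc k) (spoly k (f - spoly (Suc k) f))"
    by (simp add: ddiff_eq)
  then show "(Xv k - Xv (Suc k)) * spoly (Suc k) (spoly k (ddiff (Suc k) f)) =
      spoly (Suc k) (spoly k f) - spoly k (spoly (Suc k) (spoly k f))"
    by (simp add: spoly_braid)
qed

section \<open>The polynomial part of delta for given colours\<close>

definition dpoly :: "('v \<Rightarrow> 'v \<Rightarrow> bool) \<Rightarrow> ('v \<Rightarrow> 'v \<Rightarrow> bool) \<Rightarrow> 'v \<Rightarrow> 'v \<Rightarrow> nat \<Rightarrow> ipoly \<Rightarrow> ipoly" where
  "dpoly E Or a b k f =
     (if a = b then ddiff k f
      else if dotp E a b = 0 then spoly k f
      else if Or b a then spoly k f
      else (Xv k + Xv (Suc k)) * spoly k f)"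

lemma delta_poly_dpoly: "delta_poly E Or k i f = dpoly E Or (ent i k) (ent i (Suc k)) k f"
  by (simp add: delta_poly_def dpoly_def)

text \<open>The factor x_u + x_v attached to an edge oriented the "wrong" way, or 1.\<close>
definition edge_factor :: "bool \<Rightarrow> nat \<Rightarrow> nat \<Rightarrow> ipoly" where
  "edge_factor c u v = (if c then Xv u + Xv v else 1)"

lemma edge_factor_comm: "edge_factor c u v = edge_factor c v u"
  by (simp add: edge_factor_def add.commute)

lemma spoly_edge_factor [simp]: "spoly j (edge_factor c u v) = edge_factor c (swp j u) (swp j v)"
  by (simp add: edge_factor_def)

lemma dpoly_distinct:
  "a \<noteq> b \<Longrightarrow> dpoly E Or a b k f = edge_factor (E a b \<and> \<not> Or b a) k (Suc k) * spoly k f"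
  by (auto simp: dpoly_def dotp_def edge_factor_def)

lemma dpoly_equal: "dpoly E Or a a k f = ddiff k f"
  by (simp add: dpoly_def)

text \<open>(R4), (R5) and three of the five cases of (R6) hold at the level of polynomials
  for any E and Or.\<close>
lemma R4_far_poly:
  "l \<noteq> k \<Longrightarrow> l \<noteq> Suc k \<Longrightarrow> dpoly E Or a b k (Xv l * f) = Xv l * dpoly E Or a b k f"
  by (cases "a = b") (simp_all add: dpoly_equal dpoly_distinct ddiff_mult_symmetric)

lemma R4_distinct_poly:
  "a \<noteq> b \<Longrightarrow> dpoly E Or a b k (Xv k * f) = Xv (Suc k) * dpoly E Or a b k f \<and>
    dpoly E Or a b k (Xv (Suc k) * f) = Xv k * dpoly E Or a b k f"
  by (simp add: dpoly_distinct)

lemma R4_equal_poly: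
  "Xv k * dpoly E Or a a k f - dpoly E Or a a k (Xv (Suc k) * f) = f \<and>
    dpoly E Or a a k (Xv k * f) - Xv (Suc k) * dpoly E Or a a k f = f"
  by (simp add: dpoly_equal ddiff_mult_Xv_Suc ddiff_mult_Xv)

lemma R5_poly:
  assumes far: "Suc k < l \<or> Suc l < k"
  shows "dpoly E Or c d k (dpoly E Or a b l f) = dpoly E Or a b l (dpoly E Or c d k f)"
proof -
  have swp_far: "swp k l = l" "swp k (Suc l) = Suc l" "swp l k = k" "swp l (Suc k) = Suc k"
    using far by (auto simp: swp_def)
  have "ddiff k (edge_factor x l (Suc l) * g) = edge_factor x l (Suc l) * ddiff k g" for x g
    by (rule ddiff_mult_symmetric) (simp add: swp_far)
  moreover have "ddiff l (edge_factor x k (Suc k) * g) = edge_factor x k (Suc k) * ddiff l g" for x g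
    by (rule ddiff_mult_symmetric) (simp add: swp_far)
  moreover have "Suc l < k \<or> Suc k < l"
    using far by auto
  ultimately show ?thesis
    by (cases "a = b"; cases "c = d")
      (simp_all add: dpoly_equal dpoly_distinct ddiff_far[OF far] ddiff_spoly_far[OF far]
        ddiff_spoly_far swp_far spoly_comm[OF far] algebra_simps)
qed

lemma braid_aac:
  assumes "a \<noteq> c"
  shows "dpoly E Or a c k (dpoly E Or a c (Suc k) (dpoly E Or a a k f))
    = dpoly E Or a a (Suc k) (dpoly E Or a c k (dpoly E Or a c (Suc k) f))"
proof -
  define u where "u = (E a c \<and> \<not> Or c a)"
  define P where "P = edge_factor u k (Suc k) * edge_factor u k (Suc (Suc k))"
  have "spoly (Suc k) P = P"
    unfolding P_def by (simp add: edge_factor_comm mult.commute)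
  moreover have "dpoly E Or a c k (dpoly E Or a c (Suc k) (dpoly E Or a a k f))
      = P * spoly k (spoly (Suc k) (ddiff k f))"
    using assms by (simp add: dpoly_distinct dpoly_equal P_def u_def)
  moreover have "dpoly E Or a a (Suc k) (dpoly E Or a c k (dpoly E Or a c (Suc k) f))
      = ddiff (Suc k) (P * spoly k (spoly (Suc k) f))"
    using assms by (simp add: dpoly_distinct dpoly_equal P_def u_def mult.assoc)
  ultimately show ?thesis
    by (simp add: ddiff_mult_symmetric spoly_spoly_Suc_ddiff)
qed

lemma braid_abb:
  assumes "a \<noteq> b"
  shows "dpoly E Or b b k (dpoly E Or a b (Suc k) (dpoly E Or a b k f))
    = dpoly E Or a b (Suc k) (dpoly E Or a b k (dpoly E Or b b (Suc k) f))"
proof -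
  define u where "u = (E a b \<and> \<not> Or b a)"
  define P where "P = edge_factor u (Suc k) (Suc (Suc k)) * edge_factor u k (Suc (Suc k))"
  have "spoly k P = P"
    unfolding P_def by (simp add: edge_factor_comm mult.commute)
  moreover have "dpoly E Or b b k (dpoly E Or a b (Suc k) (dpoly E Or a b k f))
      = ddiff k (P * spoly (Suc k) (spoly k f))"
    using assms by (simp add: dpoly_distinct dpoly_equal P_def u_def mult.assoc)
  moreover have "dpoly E Or a b (Suc k) (dpoly E Or a b k (dpoly E Or b b (Suc k) f))
      = P * spoly (Suc k) (spoly k (ddiff (Suc k) f))"
    using assms by (simp add: dpoly_distinct dpoly_equal P_def u_def mult.assoc)
  ultimately show ?thesis
    by (simp add: ddiff_mult_symmetric spoly_Suc_spoly_ddiff)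
qed

lemma braid_abc:
  assumes "a \<noteq> b" "b \<noteq> c" "a \<noteq> c"
  shows "dpoly E Or b c k (dpoly E Or a c (Suc k) (dpoly E Or a b k f))
    = dpoly E Or a b (Suc k) (dpoly E Or a c k (dpoly E Or b c (Suc k) f))"
  using assms by (simp add: dpoly_distinct spoly_braid edge_factor_comm ac_simps)

locale orientation =
  fixes E Or :: "'v \<Rightarrow> 'v \<Rightarrow> bool"
  assumes E_sym: "\<And>a b. E a b \<Longrightarrow> E b a"
    and Or_edge: "\<And>a b. Or a b \<Longrightarrow> E a b"
    and Or_orient: "\<And>a b. E a b \<Longrightarrow> Or a b \<noteq> Or b a"
begin

text \<open>Along an edge exactly one of the two directions carries the factor x_k + x_(k+1).\<close>
lemma edge_factor_pair:
  assumes "a \<noteq> b"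
  shows "edge_factor (E b a \<and> \<not> Or a b) u v * edge_factor (E a b \<and> \<not> Or b a) u v
    = (if dotp E a b = 0 then 1 else Xv u + Xv v)"
  using assms E_sym[of a b] E_sym[of b a] Or_orient[of a b]
  by (auto simp: edge_factor_def dotp_def)

lemma R3_poly:
  "dpoly E Or b a k (dpoly E Or a b k f) =
    (if a = b then 0 else if dotp E a b = 0 then f else (Xv k + Xv (Suc k)) * f)"
proof (cases "a = b")
  case True
  then show ?thesis by (simp add: dpoly_equal ddiff_ddiff)
next
  case False
  then have "dpoly E Or b a k (dpoly E Or a b k f)
      = edge_factor (E b a \<and> \<not> Or a b) k (Suc k) * edge_factor (E a b \<and> \<not> Or b a) k (Suc k) * f"
    by (simp add: dpoly_distinct edge_factor_comm[of _ "Suc k"])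
  with False show ?thesis
    by (simp add: edge_factor_pair)
qed

text \<open>The only case with a nonzero right-hand side: colours a b a along an edge.
  Multiplying both sides by x_k - x_(k+2) reduces it to edge_factor_pair.\<close>
lemma braid_aba:
  assumes "a \<noteq> b"
  shows "dpoly E Or b a k (dpoly E Or a a (Suc k) (dpoly E Or a b k f))
      - dpoly E Or a b (Suc k) (dpoly E Or a a k (dpoly E Or b a (Suc k) f))
    = (if dotp E a b = -1 then f else 0)"
proof -
  define u where "u = (E a b \<and> \<not> Or b a)"
  define v where "v = (E b a \<and> \<not> Or a b)"
  define w where "w = spoly k (spoly (Suc k) (spoly k f))"
  have w': "spoly (Suc k) (spoly k (spoly (Suc k) f)) = w"
    unfolding w_def by (simp add: spoly_braid)
  define g1 where "g1 = ddiff (Suc k) (edge_factor u k (Suc k) * spoly k f)"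
  define g2 where "g2 = ddiff k (edge_factor v (Suc k) (Suc (Suc k)) * spoly (Suc k) f)"
  have L: "dpoly E Or b a k (dpoly E Or a a (Suc k) (dpoly E Or a b k f)) = edge_factor v k (Suc k) * spoly k g1"
    using assms by (simp add: dpoly_distinct dpoly_equal u_def v_def g1_def)
  have R: "dpoly E Or a b (Suc k) (dpoly E Or a a k (dpoly E Or b a (Suc k) f))
      = edge_factor u (Suc k) (Suc (Suc k)) * spoly (Suc k) g2"
    using assms by (simp add: dpoly_distinct dpoly_equal u_def v_def g2_def)
  have G1: "(Xv (Suc k) - Xv (Suc (Suc k))) * g1
      = edge_factor u k (Suc k) * spoly k f - spoly (Suc k) (edge_factor u k (Suc k) * spoly k f)"
    unfolding g1_def by (rule ddiff_eq)
  have G1s: "(Xv k - Xv (Suc (Suc k))) * spoly k g1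
      = edge_factor u k (Suc k) * f - edge_factor u (Suc k) (Suc (Suc k)) * w"
    using arg_cong[OF G1, of "spoly k"] unfolding w_def by (simp add: edge_factor_comm)
  have G2: "(Xv k - Xv (Suc k)) * g2 = edge_factor v (Suc k) (Suc (Suc k)) * spoly (Suc k) f
      - spoly k (edge_factor v (Suc k) (Suc (Suc k)) * spoly (Suc k) f)"
    unfolding g2_def by (rule ddiff_eq)
  have G2s: "(Xv k - Xv (Suc (Suc k))) * spoly (Suc k) g2
      = edge_factor v (Suc k) (Suc (Suc k)) * f - edge_factor v k (Suc k) * w"
    using arg_cong[OF G2, of "spoly (Suc k)"] unfolding w' [symmetric] by (simp add: edge_factor_comm)
  have "(Xv k - Xv (Suc (Suc k)))
        * (edge_factor v k (Suc k) * spoly k g1 - edge_factor u (Suc k) (Suc (Suc k)) * spoly (Suc k) g2)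
      = (edge_factor v k (Suc k) * edge_factor u k (Suc k)
         - edge_factor v (Suc k) (Suc (Suc k)) * edge_factor u (Suc k) (Suc (Suc k))) * f"
    using G1s G2s by algebra
  also have "\<dots> = (Xv k - Xv (Suc (Suc k))) * (if dotp E a b = -1 then f else 0)"
    using assms unfolding u_def v_def edge_factor_pair[OF assms]
    by (auto simp: dotp_def)
  finally show ?thesis
    unfolding L R by (simp add: Xv_inj)
qed

lemma R6_poly:
  "dpoly E Or b c k (dpoly E Or a c (Suc k) (dpoly E Or a b k f))
      - dpoly E Or a b (Suc k) (dpoly E Or a c k (dpoly E Or b c (Suc k) f))
    = (if a = c \<and> dotp E a b = -1 then f else 0)"
proof -
  consider "a = b" "b = c" | "a = b" "b \<noteq> c" | "a \<noteq> b" "b = c" | "a \<noteq> b" "b \<noteq> c" "a = c"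
    | "a \<noteq> b" "b \<noteq> c" "a \<noteq> c"
    by blast
  then show ?thesis
  proof cases
    case 1
    then show ?thesis by (simp add: dpoly_equal ddiff_braid dotp_def)
  next
    case 2
    then show ?thesis using braid_aac[of a c E Or k f] by simp
  next
    case 3
    then show ?thesis using braid_abb[of a b E Or k f] by simp
  next
    case 4
    then show ?thesis using braid_aba[of a b k f] by simp
  next
    case 5
    then show ?thesis using braid_abc[of a b c E Or k f] by simp
  qed
qed

end

lemma length_sseq [simp]: "length (sseq k is) = length is"
  by (simp add: sseq_def)

lemma nth_sseq:
  "1 \<le> k \<Longrightarrow> k < length is \<Longrightarrow> j < length is \<Longrightarrow>
    sseq k is ! j = (if j = k then is ! (k - 1) else if j = k - 1 then is ! k else is ! j)"
  by (auto simp: sseq_def nth_list_update)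

lemma ent_sseq:
  "1 \<le> k \<Longrightarrow> k < length is \<Longrightarrow> 1 \<le> j \<Longrightarrow> j \<le> length is \<Longrightarrow>
    ent (sseq k is) j = (if j = k then ent is (Suc k) else if j = Suc k then ent is k else ent is j)"
  unfolding ent_def by (subst nth_sseq) auto

lemma sseq_sseq: "1 \<le> k \<Longrightarrow> k < length is \<Longrightarrow> sseq k (sseq k is) = is"
  by (rule nth_equalityI) (auto simp: nth_sseq)

lemma sseq_fixed: "1 \<le> k \<Longrightarrow> k < length is \<Longrightarrow> ent is k = ent is (Suc k) \<Longrightarrow> sseq k is = is"
  by (rule nth_equalityI) (auto simp: nth_sseq ent_def)

lemma sseq_comm:
  assumes "1 \<le> k" "k < length is" "1 \<le> l" "l < length is" "Suc k < l \<or> Suc l < k"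
  shows "sseq k (sseq l is) = sseq l (sseq k is)"
proof (rule nth_equalityI)
  fix j assume "j < length (sseq k (sseq l is))"
  moreover have "k \<noteq> l" "k \<noteq> l - 1" "k - 1 \<noteq> l" "k - 1 \<noteq> l - 1"
    using assms by auto
  ultimately show "sseq k (sseq l is) ! j = sseq l (sseq k is) ! j"
    using assms by (simp add: nth_sseq)
qed simp

lemma sseq_braid:
  "1 \<le> k \<Longrightarrow> Suc k < length is \<Longrightarrow>
    sseq k (sseq (Suc k) (sseq k is)) = sseq (Suc k) (sseq k (sseq (Suc k) is))"
  by (rule nth_equalityI) (auto simp: nth_sseq)

lemma sseq_braid_fixed:
  "1 \<le> k \<Longrightarrow> Suc k < length is \<Longrightarrow> ent is k = ent is (Suc (Suc k)) \<Longrightarrow>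
    sseq k (sseq (Suc k) (sseq k is)) = is"
  by (rule nth_equalityI) (auto simp: nth_sseq ent_def)

lemma sseq_in_Seq: "is \<in> Seq \<nu> \<Longrightarrow> 1 \<le> k \<Longrightarrow> k < length is \<Longrightarrow> sseq k is \<in> Seq \<nu>"
proof -
  assume "is \<in> Seq \<nu>" "1 \<le> k" "k < length is"
  then have "mset (sseq k is) = mset is"
    unfolding sseq_def by (simp add: mset_swap)
  then have "count_list (sseq k is) x = count_list is x" for x
    by (metis count_mset)
  with \<open>is \<in> Seq \<nu>\<close> show ?thesis
    by (simp add: Seq_def)
qed

lemma set_Seq:
  assumes supp: "\<And>i. \<nu> i \<noteq> 0 \<Longrightarrow> i \<in> I" and "is \<in> Seq \<nu>"
  shows "set is \<subseteq> I"
proof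
  fix x assume "x \<in> set is"
  then have "count_list is x \<noteq> 0"
    by (simp add: count_list_0_iff)
  then have "\<nu> x \<noteq> 0"
    using \<open>is \<in> Seq \<nu>\<close> by (simp add: Seq_def)
  then show "x \<in> I"
    by (rule supp)
qed

lemma length_Seq:
  assumes "finite I" "\<And>i. \<nu> i \<noteq> 0 \<Longrightarrow> i \<in> I" "is \<in> Seq \<nu>"
  shows "length is = (\<Sum>i\<in>I. \<nu> i)"
proof -
  have "set is \<subseteq> I"
    using assms(2,3) by (rule set_Seq)
  with assms(1) have "sum (count_list is) I = length is"
    by (intro sum_count_set)
  then show ?thesis
    using assms(3) by (simp add: Seq_def)
qed

lemma finite_Seq:
  assumes "finite I" "\<And>i. \<nu> i \<noteq> 0 \<Longrightarrow> i \<in> I"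
  shows "finite (Seq \<nu>)"
proof (rule finite_subset)
  show "Seq \<nu> \<subseteq> {xs. set xs \<subseteq> I \<and> length xs = (\<Sum>i\<in>I. \<nu> i)}"
    using set_Seq[OF assms(2)] length_Seq[OF assms] by blast
  show "finite {xs. set xs \<subseteq> I \<and> length xs = (\<Sum>i\<in>I. \<nu> i)}"
    using assms(1) by (rule finite_lists_length_eq)
qed

section \<open>The operators on Pol_nu\<close>

lemma Polnu_iff:
  "F \<in> Polnu \<nu> m \<longleftrightarrow> (\<forall>j. j \<notin> Seq \<nu> \<longrightarrow> F j = 0) \<and> (\<forall>j. pvars (F j) \<subseteq> {1..m})"
  by (simp add: Polnu_def)

lemma one_op_closed: "F \<in> Polnu \<nu> m \<Longrightarrow> i \<in> Seq \<nu> \<Longrightarrow> one_op i F \<in> Polnu \<nu> m"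
  unfolding Polnu_iff one_op_def by auto

lemma x_op_closed:
  assumes F: "F \<in> Polnu \<nu> m" and "i \<in> Seq \<nu>" "k \<in> {1..m}"
  shows "x_op k i F \<in> Polnu \<nu> m"
proof -
  have "pvars (F i) \<subseteq> {1..m}"
    using F unfolding Polnu_iff by blast
  then have "pvars (Xv k * F i) \<subseteq> {1..m}"
    using pvars_mult[of "Xv k" "F i"] \<open>k \<in> {1..m}\<close> by auto
  then show ?thesis
    using \<open>i \<in> Seq \<nu>\<close> unfolding Polnu_iff x_op_def by auto
qed

lemma pvars_delta_poly: "pvars (delta_poly E Or k i f) \<subseteq> swp k ` pvars f \<union> pvars f \<union> {k, Suc k}"
proof -
  have "pvars ((Xv k + Xv (Suc k)) * spoly k f) \<subseteq> swp k ` pvars f \<union> {k, Suc k}"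
    using pvars_mult[of "Xv k + Xv (Suc k)" "spoly k f"] pvars_add[of "Xv k" "Xv (Suc k)"]
      pvars_spoly[of k f]
    by auto
  then show ?thesis
    unfolding delta_poly_def using pvars_ddiff[of k f] pvars_spoly[of k f] by auto
qed

lemma delta_op_closed:
  assumes F: "F \<in> Polnu \<nu> m" and "i \<in> Seq \<nu>" "1 \<le> k" "k < m" "k < length i"
  shows "delta_op E Or k i F \<in> Polnu \<nu> m"
proof -
  have "pvars (F i) \<subseteq> {1..m}"
    using F unfolding Polnu_iff by blast
  moreover have "swp k ` {1..m} \<subseteq> {1..m}"
    using \<open>1 \<le> k\<close> \<open>k < m\<close> by (auto simp: swp_def)
  moreover have "{k, Suc k} \<subseteq> {1..m}"
    using \<open>1 \<le> k\<close> \<open>k < m\<close> by auto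
  ultimately have "pvars (delta_poly E Or k i (F i)) \<subseteq> {1..m}"
    using pvars_delta_poly[of E Or k i "F i"] by blast
  moreover have "sseq k i \<in> Seq \<nu>"
    using assms by (intro sseq_in_Seq)
  ultimately show ?thesis
    unfolding Polnu_iff delta_op_def by auto
qed

lemma sum_apply: "sum f S x = (\<Sum>i\<in>S. f i x)"
  by (induction S rule: infinite_finite_induct) auto

lemma one_op_one_op: "one_op i (one_op j F) = (if i = j then one_op i F else 0)"
  by (auto simp: one_op_def fun_eq_iff)

lemma sum_one_op:
  assumes "finite (Seq \<nu>)" "F \<in> Polnu \<nu> m"
  shows "(\<Sum>i\<in>Seq \<nu>. one_op i F) = F"
proof
  fix j
  have "(\<Sum>i\<in>Seq \<nu>. one_op i F) j = (\<Sum>i\<in>Seq \<nu>. if j = i then F i else 0)"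
    by (simp add: sum_apply one_op_def)
  also have "\<dots> = F j"
    using assms by (auto simp: sum.delta Polnu_def)
  finally show "(\<Sum>i\<in>Seq \<nu>. one_op i F) j = F j" .
qed

lemma x_op_idempotents: "x_op k i F = one_op i (x_op k i (one_op i F))"
  by (auto simp: one_op_def x_op_def fun_eq_iff)

lemma delta_op_idempotents: "delta_op E Or k i F = one_op (sseq k i) (delta_op E Or k i (one_op i F))"
  by (auto simp: one_op_def delta_op_def fun_eq_iff)

lemma x_op_comm: "x_op k i (x_op l i F) = x_op l i (x_op k i F)"
  by (auto simp: x_op_def fun_eq_iff ac_simps)

lemma R4_far:
  "l \<noteq> k \<Longrightarrow> l \<noteq> Suc k \<Longrightarrow> delta_op E Or k i (x_op l i F) = x_op l (sseq k i) (delta_op E Or k i F)"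
  by (simp add: fun_eq_iff delta_op_def x_op_def delta_poly_dpoly R4_far_poly)

lemma R4_distinct:
  "ent i k \<noteq> ent i (Suc k) \<Longrightarrow>
    delta_op E Or k i (x_op k i F) = x_op (Suc k) (sseq k i) (delta_op E Or k i F) \<and>
    delta_op E Or k i (x_op (Suc k) i F) = x_op k (sseq k i) (delta_op E Or k i F)"
  by (simp add: fun_eq_iff delta_op_def x_op_def delta_poly_dpoly R4_distinct_poly)

text \<open>(R4) for equal colours: here s_k i = i.\<close>
lemma R4_equal:
  assumes "1 \<le> k" "k < length i" "ent i k = ent i (Suc k)"
  shows "x_op k i (delta_op E Or k i F) - delta_op E Or k i (x_op (Suc k) i F) = one_op i F \<and>
    delta_op E Or k i (x_op k i F) - x_op (Suc k) i (delta_op E Or k i F) = one_op i F"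
proof -
  have "sseq k i = i"
    using assms by (rule sseq_fixed)
  then show ?thesis
    using R4_equal_poly[of k E Or "ent i k" "F i"] assms(3)
    by (simp add: fun_eq_iff delta_op_def x_op_def one_op_def delta_poly_dpoly)
qed

lemma R5:
  assumes "1 \<le> k" "k < length i" "1 \<le> l" "l < length i" and far: "k > Suc l \<or> l > Suc k"
  shows "delta_op E Or k (sseq l i) (delta_op E Or l i F) = delta_op E Or l (sseq k i) (delta_op E Or k i F)"
proof -
  have "ent (sseq l i) k = ent i k" "ent (sseq l i) (Suc k) = ent i (Suc k)"
    "ent (sseq k i) l = ent i l" "ent (sseq k i) (Suc l) = ent i (Suc l)"
    using assms by (auto simp: ent_sseq)
  moreover have "sseq k (sseq l i) = sseq l (sseq k i)"
    using assms by (intro sseq_comm) auto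
  moreover have far': "Suc k < l \<or> Suc l < k"
    using far by auto
  ultimately show ?thesis
    by (simp add: fun_eq_iff delta_op_def delta_poly_dpoly R5_poly[OF far'])
qed

context orientation
begin

lemma R3:
  assumes "1 \<le> k" "k < length i"
  shows "delta_op E Or k (sseq k i) (delta_op E Or k i F) =
    (if ent i k = ent i (Suc k) then 0
     else if dotp E (ent i k) (ent i (Suc k)) = 0 then one_op i F
     else x_op k i F + x_op (Suc k) i F)"
proof -
  have "ent (sseq k i) k = ent i (Suc k)" "ent (sseq k i) (Suc k) = ent i k" "sseq k (sseq k i) = i"
    using assms by (simp_all add: ent_sseq sseq_sseq)
  then have "delta_op E Or k (sseq k i) (delta_op E Or k i F) = (\<lambda>j. if j = i then
      dpoly E Or (ent i (Suc k)) (ent i k) k (dpoly E Or (ent i k) (ent i (Suc k)) k (F i)) else 0)"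
    by (simp add: fun_eq_iff delta_op_def delta_poly_dpoly)
  then show ?thesis
    by (simp add: R3_poly fun_eq_iff one_op_def x_op_def algebra_simps)
qed

text \<open>(R6).  Both triple products land in the component s_k s_(k+1) s_k i, which is i
  exactly when the right-hand side can be nonzero.\<close>
lemma R6:
  assumes "1 \<le> k" "Suc k < length i"
  shows "delta_op E Or k (sseq (Suc k) (sseq k i)) (delta_op E Or (Suc k) (sseq k i) (delta_op E Or k i F))
      - delta_op E Or (Suc k) (sseq k (sseq (Suc k) i))
          (delta_op E Or k (sseq (Suc k) i) (delta_op E Or (Suc k) i F))
    = (if ent i k = ent i (Suc (Suc k)) \<and> dotp E (ent i k) (ent i (Suc k)) = -1 then one_op i F else 0)"
proof -
  define j where "j = sseq k (sseq (Suc k) (sseq k i))"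
  have "ent (sseq k i) (Suc k) = ent i k" "ent (sseq k i) (Suc (Suc k)) = ent i (Suc (Suc k))"
    "ent (sseq (Suc k) (sseq k i)) k = ent i (Suc k)"
    "ent (sseq (Suc k) (sseq k i)) (Suc k) = ent i (Suc (Suc k))"
    "ent (sseq (Suc k) i) k = ent i k" "ent (sseq (Suc k) i) (Suc k) = ent i (Suc (Suc k))"
    "ent (sseq k (sseq (Suc k) i)) (Suc k) = ent i k"
    "ent (sseq k (sseq (Suc k) i)) (Suc (Suc k)) = ent i (Suc k)"
    "sseq (Suc k) (sseq k (sseq (Suc k) i)) = j"
    using assms by (simp_all add: ent_sseq sseq_braid j_def)
  then have lhs: "delta_op E Or k (sseq (Suc k) (sseq k i)) (delta_op E Or (Suc k) (sseq k i) (delta_op E Or k i F))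
      - delta_op E Or (Suc k) (sseq k (sseq (Suc k) i))
          (delta_op E Or k (sseq (Suc k) i) (delta_op E Or (Suc k) i F))
    = (\<lambda>x. if x = j then
        dpoly E Or (ent i (Suc k)) (ent i (Suc (Suc k))) k
          (dpoly E Or (ent i k) (ent i (Suc (Suc k))) (Suc k) (dpoly E Or (ent i k) (ent i (Suc k)) k (F i)))
        - dpoly E Or (ent i k) (ent i (Suc k)) (Suc k)
          (dpoly E Or (ent i k) (ent i (Suc (Suc k))) k (dpoly E Or (ent i (Suc k)) (ent i (Suc (Suc k))) (Suc k) (F i)))
      else 0)"
    by (simp add: fun_eq_iff delta_op_def delta_poly_dpoly j_def)
  note lhs = lhs[unfolded R6_poly]
  show ?thesis
  proof (cases "ent i k = ent i (Suc (Suc k)) \<and> dotp E (ent i k) (ent i (Suc k)) = -1")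
    case True
    then have "j = i"
      unfolding j_def using assms by (intro sseq_braid_fixed) auto
    with True show ?thesis
      unfolding lhs by (simp add: fun_eq_iff one_op_def)
  next
    case False
    show ?thesis
      unfolding lhs if_not_P[OF False] by (simp add: fun_eq_iff)
  qed
qed

end

text \<open>The operators 1_i, x_(k,i), delta_(k,i) preserve Pol_nu and satisfy the defining
  relations (R1)-(R6) of R(nu); only the length |nu| of the sequences, the finiteness
  of Seq nu and the orientation axioms enter.\<close>
theorem mainTheorem2:
  fixes I :: "'v set" and E Or :: "'v \<Rightarrow> 'v \<Rightarrow> bool" and \<nu> :: "'v \<Rightarrow> nat" and m :: nat
  assumes finI: "finite I"
    and E_sym: "\<And>a b. E a b \<Longrightarrow> E b a"
    and E_irr: "\<And>a. \<not> E a a"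
    and E_in: "\<And>a b. E a b \<Longrightarrow> a \<in> I \<and> b \<in> I"
    and Or_edge: "\<And>a b. Or a b \<Longrightarrow> E a b"
    and Or_orient: "\<And>a b. E a b \<Longrightarrow> Or a b \<noteq> Or b a"
    and nu_supp: "\<And>i. \<nu> i \<noteq> 0 \<Longrightarrow> i \<in> I"
    and m_def: "m = (\<Sum>i\<in>I. \<nu> i)"
  shows
   \<comment> \<open>the operators preserve Pol_nu\<close>
   "(\<forall>i\<in>Seq \<nu>. \<forall>F\<in>Polnu \<nu> m. one_op i F \<in> Polnu \<nu> m) \<and>
    (\<forall>i\<in>Seq \<nu>. \<forall>k\<in>{1..m}. \<forall>F\<in>Polnu \<nu> m. x_op k i F \<in> Polnu \<nu> m) \<and>
    (\<forall>i\<in>Seq \<nu>. \<forall>k\<in>{1..<m}. \<forall>F\<in>Polnu \<nu> m. delta_op E Or k i F \<in> Polnu \<nu> m) \<and>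
   \<comment> \<open>(R1)\<close>
    (\<forall>i\<in>Seq \<nu>. \<forall>j\<in>Seq \<nu>. \<forall>F\<in>Polnu \<nu> m.
        one_op i (one_op j F) = (if i = j then one_op i F else 0)) \<and>
    (\<forall>F\<in>Polnu \<nu> m. (\<Sum>i\<in>Seq \<nu>. one_op i F) = F) \<and>
    (\<forall>i\<in>Seq \<nu>. \<forall>k\<in>{1..m}. \<forall>F\<in>Polnu \<nu> m.
        x_op k i F = one_op i (x_op k i (one_op i F))) \<and>
    (\<forall>i\<in>Seq \<nu>. \<forall>k\<in>{1..<m}. \<forall>F\<in>Polnu \<nu> m.
        delta_op E Or k i F = one_op (sseq k i) (delta_op E Or k i (one_op i F))) \<and>
   \<comment> \<open>(R2)\<close>
    (\<forall>i\<in>Seq \<nu>. \<forall>k\<in>{1..m}. \<forall>l\<in>{1..m}. \<forall>F\<in>Polnu \<nu> m.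
        x_op k i (x_op l i F) = x_op l i (x_op k i F)) \<and>
   \<comment> \<open>(R3)\<close>
    (\<forall>i\<in>Seq \<nu>. \<forall>k\<in>{1..<m}. \<forall>F\<in>Polnu \<nu> m.
        delta_op E Or k (sseq k i) (delta_op E Or k i F) =
          (if ent i k = ent i (Suc k) then 0
           else if dotp E (ent i k) (ent i (Suc k)) = 0 then one_op i F
           else x_op k i F + x_op (Suc k) i F)) \<and>
   \<comment> \<open>(R4)\<close>
    (\<forall>i\<in>Seq \<nu>. \<forall>k\<in>{1..<m}. \<forall>l\<in>{1..m}. \<forall>F\<in>Polnu \<nu> m.
        l \<noteq> k \<longrightarrow> l \<noteq> Suc k \<longrightarrow>
        delta_op E Or k i (x_op l i F) = x_op l (sseq k i) (delta_op E Or k i F)) \<and>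
    (\<forall>i\<in>Seq \<nu>. \<forall>k\<in>{1..<m}. \<forall>F\<in>Polnu \<nu> m. ent i k \<noteq> ent i (Suc k) \<longrightarrow>
        delta_op E Or k i (x_op k i F) = x_op (Suc k) (sseq k i) (delta_op E Or k i F) \<and>
        delta_op E Or k i (x_op (Suc k) i F) = x_op k (sseq k i) (delta_op E Or k i F)) \<and>
    (\<forall>i\<in>Seq \<nu>. \<forall>k\<in>{1..<m}. \<forall>F\<in>Polnu \<nu> m. ent i k = ent i (Suc k) \<longrightarrow>
        x_op k i (delta_op E Or k i F) - delta_op E Or k i (x_op (Suc k) i F) = one_op i F \<and>
        delta_op E Or k i (x_op k i F) - x_op (Suc k) i (delta_op E Or k i F) = one_op i F) \<and>
   \<comment> \<open>(R5)\<close>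
    (\<forall>i\<in>Seq \<nu>. \<forall>k\<in>{1..<m}. \<forall>l\<in>{1..<m}. \<forall>F\<in>Polnu \<nu> m.
        (k > Suc l \<or> l > Suc k) \<longrightarrow>
        delta_op E Or k (sseq l i) (delta_op E Or l i F) =
        delta_op E Or l (sseq k i) (delta_op E Or k i F)) \<and>
   \<comment> \<open>(R6)\<close>
    (\<forall>i\<in>Seq \<nu>. \<forall>k\<in>{1..<m-1}. \<forall>F\<in>Polnu \<nu> m.
        delta_op E Or k (sseq (Suc k) (sseq k i))
          (delta_op E Or (Suc k) (sseq k i) (delta_op E Or k i F))
        - delta_op E Or (Suc k) (sseq k (sseq (Suc k) i))
          (delta_op E Or k (sseq (Suc k) i) (delta_op E Or (Suc k) i F))
        = (if ent i k = ent i (Suc (Suc k)) \<and> dotp E (ent i k) (ent i (Suc k)) = -1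
           then one_op i F else 0))"
proof -
  interpret orientation E Or
    using E_sym Or_edge Or_orient by unfold_locales
  have len: "length i = m" if "i \<in> Seq \<nu>" for i
    using length_Seq[OF finI nu_supp that] m_def by simp
  have fin: "finite (Seq \<nu>)"
    using finI nu_supp by (rule finite_Seq)
  show ?thesis
    by (intro conjI ballI impI)
      (auto simp: len less_diff_conv one_op_closed x_op_closed delta_op_closed
        one_op_one_op sum_one_op[OF fin] x_op_comm R3 R4_far R4_distinct R4_equal R5 R6
        intro: x_op_idempotents delta_op_idempotents)
qed

end
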